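(* Define $\varepsilon:\mathbb{N}\to(0,\infty)$ by $\varepsilon(n)=n^{-2}$ if $n=2^k$ for some $k\in\mathbb{N}$, and $\varepsilon(n)=n^{-3}$ otherwise. Then $\sum_{n\geq1}n\,\varepsilon(n)<+\infty$ and $\mathcal{U}(\varepsilon)=(0,1)\setminus\mathbb{Q}$.
   Context: For $\alpha\in(0,1)\setminus\mathbb{Q}$, let $\Delta^2$ be the closed unit bidisk, $\mathcal{P}_n$ the polynomials in $\mathbb{C}[z,w]$ of total degree at most $n$, $K=\{(e^z,e^{\alpha z}):|z|\leq1\}$, $E_n(\alpha)=\sup\{\sup_{\Delta^2}|P|:\ P\in\mathcal{P}_n,\ \sup_K|P|\leq1\}$, $e_n(\alpha)=\log E_n(\alpha)$, and $\mathcal{U}(\varepsilon)=\{\alpha\in(0,1)\setminus\mathbb{Q}:\ \limsup_{n\to\infty}\varepsilon(n)e_n(\alpha)=+\infty\}$. *)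

theory Defs
  imports "HOL-Analysis.Analysis" "HOL-Library.Liminf_Limsup"
begin

definition evalP :: "nat \<Rightarrow> (nat \<Rightarrow> nat \<Rightarrow> complex) \<Rightarrow> complex \<Rightarrow> complex \<Rightarrow> complex" where
  "evalP n c z w = (\<Sum>(i,j)\<in>{(i,j). i + j \<le> n}. c i j * z ^ i * w ^ j)"

definition bidisk :: "(complex \<times> complex) set" where
  "bidisk = cball 0 1 \<times> cball 0 1"

definition Kset :: "real \<Rightarrow> (complex \<times> complex) set" where
  "Kset \<alpha> = (\<lambda>z. (exp z, exp (complex_of_real \<alpha> * z))) ` cball 0 1"

definition supBidisk :: "nat \<Rightarrow> (nat \<Rightarrow> nat \<Rightarrow> complex) \<Rightarrow> real" where
  "supBidisk n c = (SUP p\<in>bidisk. norm (evalP n c (fst p) (snd p)))"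

definition supK :: "real \<Rightarrow> nat \<Rightarrow> (nat \<Rightarrow> nat \<Rightarrow> complex) \<Rightarrow> real" where
  "supK \<alpha> n c = (SUP p\<in>Kset \<alpha>. norm (evalP n c (fst p) (snd p)))"

definition E_n :: "nat \<Rightarrow> real \<Rightarrow> real" where
  "E_n n \<alpha> = Sup {supBidisk n c | c. supK \<alpha> n c \<le> 1}"

definition e_n :: "nat \<Rightarrow> real \<Rightarrow> real" where
  "e_n n \<alpha> = ln (E_n n \<alpha>)"

definition U_set :: "(nat \<Rightarrow> real) \<Rightarrow> real set" where
  "U_set \<epsilon> = {\<alpha>. \<alpha> \<in> {0<..<1} - \<rat> \<and>
      limsup (\<lambda>n. ereal (\<epsilon> n * e_n n \<alpha>)) = \<infinity>}"

definition eps_ex :: "nat \<Rightarrow> real" where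
  "eps_ex n = (if \<exists>k. n = 2 ^ k then 1 / real n ^ 2 else 1 / real n ^ 3)"

end

theory Submission
  imports Defs "HOL-Computational_Algebra.Polynomial" "HOL-Real_Asymp.Real_Asymp"
begin

(* Summability of n * eps(n) is elementary: it is dominated by 1/n^2 plus the
   geometric series over the dyadic integers.

   For U(eps), fix an irrational alpha in (0,1).  On K a polynomial of degree
   <= n becomes an exponential sum  sum c_k exp(lambda_k z)  with the pairwise
   distinct frequencies lambda_(i,j) = i + alpha j in [0,n].
   (1) E_n(alpha) is finite: sampling the sum at equally spaced real points and
       applying an annihilating polynomial recovers each coefficient, so the
       coefficients (hence the sup over the bidisk) are controlled by sup_K.
   (2) E_n(alpha) is large: the exponential sum with divided-difference weights
       1 / prod_(l /= k) (lambda_k - lambda_l), over s+1 frequencies, has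
       Taylor coefficients bounded by those of z^s exp(n z) / s!, hence sup_K is
       at most e^n / s!, while its constant coefficient is at least n^-s.
       This gives E_n(alpha) >= s! / (n^s e^n).
   Using the (m+1)^2 monomials with i, j <= m in degree n = 2m gives
   e_(2m) >= m^2 ln(m / 2e) - 2m, and along n = 2^(k+1) this is of size
   n^2 log n, so eps(n) e_n(alpha) -> infinity along that subsequence. *)

section \<open>Polynomials on K as exponential sums\<close>

text \<open>The frequency of the monomial z^i w^j on K: there it equals exp((i + alpha j) z).\<close>
definition freq :: "real \<Rightarrow> nat \<times> nat \<Rightarrow> real" where
  "freq \<alpha> k = real (fst k) + \<alpha> * real (snd k)"

lemma finite_monomials: "finite {(i,j). i + j \<le> (n::nat)}"
proof -
  have "{(i,j). i + j \<le> n} \<subseteq> {..n} \<times> {..n}" by auto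
  thus ?thesis by (rule finite_subset) auto
qed

lemma inj_freq:
  assumes "\<alpha> \<notin> \<rat>" shows "inj (freq \<alpha>)"
proof (rule injI)
  fix x y assume h: "freq \<alpha> x = freq \<alpha> y"
  obtain i j i' j' where x: "x = (i,j)" and y: "y = (i',j')" by (cases x, cases y) auto
  have e: "real i + \<alpha> * real j = real i' + \<alpha> * real j'" using h x y by (simp add: freq_def)
  have "j = j'"
  proof (rule ccontr)
    assume "j \<noteq> j'"
    then have nz: "real j - real j' \<noteq> 0" by simp
    from e have "\<alpha> * (real j - real j') = real i' - real i" by (simp add: algebra_simps)
    then have "\<alpha> = (real i' - real i) / (real j - real j')" using nz by (simp add: field_simps)
    moreover have "(real i' - real i) / (real j - real j') \<in> \<rat>" by (intro Rats_divide Rats_diff) auto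
    ultimately show False using assms by simp
  qed
  with e have "i = i'" by simp
  with \<open>j = j'\<close> x y show "x = y" by simp
qed

lemma evalP_on_K:
  "evalP n c (exp z) (exp (complex_of_real \<alpha> * z)) =
     (\<Sum>k\<in>{(i,j). i + j \<le> n}. c (fst k) (snd k) * exp (complex_of_real (freq \<alpha> k) * z))"
  unfolding evalP_def
proof (rule sum.cong[OF refl])
  fix k assume "k \<in> {(i,j). i + j \<le> n}"
  obtain i j where k: "k = (i,j)" by (cases k)
  have "exp z ^ i * exp (complex_of_real \<alpha> * z) ^ j = exp (complex_of_real (freq \<alpha> k) * z)"
    by (simp add: k freq_def exp_of_nat_mult[symmetric] exp_add[symmetric] algebra_simps)
  then show "(case k of (i, j) \<Rightarrow> c i j * exp z ^ i * exp (complex_of_real \<alpha> * z) ^ j) =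
     c (fst k) (snd k) * exp (complex_of_real (freq \<alpha> k) * z)" by (simp add: k mult.assoc)
qed

lemma evalP_00: "evalP n c 0 0 = c 0 0"
proof -
  have "evalP n c 0 0 = (\<Sum>k\<in>{(i,j). i + j \<le> n}. if k = (0,0) then c 0 0 else 0)"
    unfolding evalP_def by (rule sum.cong) (auto simp: zero_power)
  also have "\<dots> = c 0 0" by (subst sum.delta) (auto simp: finite_monomials)
  finally show ?thesis .
qed

lemma evalP_divide: "evalP n (\<lambda>i j. c i j / a) z w = evalP n c z w / a"
  unfolding evalP_def sum_divide_distrib by (rule sum.cong) auto

lemma evalP_norm_bound:
  assumes "norm z \<le> A" "norm w \<le> B"
  shows "norm (evalP n c z w) \<le> (\<Sum>k\<in>{(i,j). i + j \<le> n}. norm (c (fst k) (snd k)) * A ^ fst k * B ^ snd k)"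
  unfolding evalP_def
proof (rule order_trans[OF norm_sum], rule sum_mono)
  fix k assume "k \<in> {(i,j). i + j \<le> n}"
  obtain i j where k: "k = (i,j)" by (cases k)
  have "norm (c i j * z ^ i * w ^ j) = norm (c i j) * norm z ^ i * norm w ^ j"
    by (simp add: norm_mult norm_power)
  also have "\<dots> \<le> norm (c i j) * A ^ i * B ^ j"
    using assms order_trans[OF norm_ge_zero[of z] assms(1)] order_trans[OF norm_ge_zero[of w] assms(2)]
    by (intro mult_mono power_mono mult_left_mono zero_le_power mult_nonneg_nonneg) (auto intro: order_trans)
  finally show "norm (case k of (i, j) \<Rightarrow> c i j * z ^ i * w ^ j) \<le> norm (c (fst k) (snd k)) * A ^ fst k * B ^ snd k"
    by (simp add: k)
qed

section \<open>Recovering the coefficients of an exponential sum\<close>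

text \<open>Let x_j = exp(Lambda_j h) and p the monic polynomial vanishing at x_l for l /= k.
  Combining the samples F(q h), q <= deg p, with the coefficients of p annihilates
  every term of F except the k-th one.\<close>
lemma exp_sum_annihilation:
  fixes \<Lambda> :: "'a \<Rightarrow> real" and c :: "'a \<Rightarrow> complex"
  assumes fin: "finite T" and kT: "k \<in> T"
    and p: "p = (\<Prod>l\<in>T-{k}. [:- exp (\<Lambda> l * h), 1:])"
  shows "(\<Sum>q\<le>degree p. complex_of_real (coeff p q) *
            (\<Sum>j\<in>T. c j * exp (complex_of_real (\<Lambda> j * (real q * h)))))
         = c k * complex_of_real (poly p (exp (\<Lambda> k * h)))"
proof -
  define x where "x j = exp (\<Lambda> j * h)" for j
  have pz: "poly p (x j) = 0" if "j \<in> T" "j \<noteq> k" for j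
    unfolding p poly_prod using that fin by (intro prod_zero) (auto simp: x_def)
  have "(\<Sum>q\<le>degree p. complex_of_real (coeff p q) *
            (\<Sum>j\<in>T. c j * exp (complex_of_real (\<Lambda> j * (real q * h)))))
      = (\<Sum>j\<in>T. c j * (\<Sum>q\<le>degree p. complex_of_real (coeff p q * x j ^ q)))"
    by (simp add: sum_distrib_left sum_distrib_right x_def exp_of_nat_mult[symmetric] algebra_simps
         exp_of_real[symmetric] sum.swap[of _ T])
  also have "\<dots> = (\<Sum>j\<in>T. c j * complex_of_real (poly p (x j)))"
    by (simp add: poly_altdef)
  also have "\<dots> = c k * complex_of_real (poly p (x k))"
    by (rule sum.remove[OF fin kT, THEN trans]) (simp add: pz)
  finally show ?thesis by (simp add: x_def)
qed

lemma exp_sum_coeff_bound: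
  fixes \<Lambda> :: "'a \<Rightarrow> real" and T :: "'a set"
  assumes fin: "finite T" and inj: "inj_on \<Lambda> T" and kT: "k \<in> T"
  shows "\<exists>C\<ge>0. \<forall>(c::'a \<Rightarrow> complex) B.
           (\<forall>t\<in>{0..1}. norm (\<Sum>j\<in>T. c j * exp (complex_of_real (\<Lambda> j * t))) \<le> B)
            \<longrightarrow> norm (c k) \<le> C * B"
proof -
  define h :: real where "h = 1 / (real (card (T - {k})) + 1)"
  define p where "p = (\<Prod>l\<in>T-{k}. [:- exp (\<Lambda> l * h), 1:])"
  have degp: "degree p = card (T - {k})" unfolding p_def
    by (subst degree_prod_eq_sum_degree) (auto simp: fin)
  have hpos: "h > 0" unfolding h_def by simp
  have pk: "poly p (exp (\<Lambda> k * h)) \<noteq> 0"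
    using fin inj kT hpos unfolding p_def poly_prod by (auto simp: prod_zero_iff inj_on_def)
  define C where "C = (\<Sum>q\<le>degree p. \<bar>coeff p q\<bar>) / \<bar>poly p (exp (\<Lambda> k * h))\<bar>"
  have "norm (c k) \<le> C * B"
    if hB: "\<forall>t\<in>{0..1}. norm (\<Sum>j\<in>T. c j * exp (complex_of_real (\<Lambda> j * t))) \<le> B" for c B
  proof -
    define F where "F t = (\<Sum>j\<in>T. c j * exp (complex_of_real (\<Lambda> j * t)))" for t
    have Fb: "norm (F (real q * h)) \<le> B" if "q \<le> degree p" for q
    proof -
      have "real q * h \<le> 1" using that hpos unfolding h_def degp by (simp add: field_simps)
      then have "real q * h \<in> {0..1}" using hpos by simp
      from hB[rule_format, OF this] show ?thesis unfolding F_def .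
    qed
    have "norm (c k) * \<bar>poly p (exp (\<Lambda> k * h))\<bar> = norm (c k * complex_of_real (poly p (exp (\<Lambda> k * h))))"
      by (simp add: norm_mult)
    also have "\<dots> = norm (\<Sum>q\<le>degree p. complex_of_real (coeff p q) * F (real q * h))"
      unfolding F_def exp_sum_annihilation[OF fin kT p_def] ..
    also have "\<dots> \<le> (\<Sum>q\<le>degree p. \<bar>coeff p q\<bar> * B)"
      by (rule order_trans[OF norm_sum], rule sum_mono) (auto simp: norm_mult intro!: mult_left_mono Fb)
    also have "\<dots> = (\<Sum>q\<le>degree p. \<bar>coeff p q\<bar>) * B" by (simp add: sum_distrib_right)
    finally show ?thesis using pk unfolding C_def by (simp add: field_simps)
  qed
  moreover have "C \<ge> 0" unfolding C_def by simp
  ultimately show ?thesis by blast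
qed

section \<open>The extremal function E_n\<close>

lemma bidisk_zero: "(0,0) \<in> bidisk" by (simp add: bidisk_def)

lemma Kset_mem: "norm z \<le> 1 \<Longrightarrow> (exp z, exp (complex_of_real \<alpha> * z)) \<in> Kset \<alpha>"
  unfolding Kset_def by auto

lemma norm_evalP_le_coeffs:
  assumes "p \<in> bidisk"
  shows "norm (evalP n c (fst p) (snd p)) \<le> (\<Sum>k\<in>{(i,j). i + j \<le> n}. norm (c (fst k) (snd k)))"
  using evalP_norm_bound[of "fst p" 1 "snd p" 1 n c] assms by (auto simp: bidisk_def)

lemma supBidisk_le_coeffs: "supBidisk n c \<le> (\<Sum>k\<in>{(i,j). i + j \<le> n}. norm (c (fst k) (snd k)))"
  unfolding supBidisk_def using bidisk_zero norm_evalP_le_coeffs by (intro cSUP_least) auto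

lemma supBidisk_ge: "p \<in> bidisk \<Longrightarrow> norm (evalP n c (fst p) (snd p)) \<le> supBidisk n c"
  unfolding supBidisk_def using norm_evalP_le_coeffs by (intro cSUP_upper bdd_aboveI2) auto

text \<open>K lies in the polydisk of radii e and e^|alpha|, so supK is a finite supremum.\<close>
lemma bdd_above_K: "bdd_above ((\<lambda>p. norm (evalP n c (fst p) (snd p))) ` Kset \<alpha>)"
proof (rule bdd_aboveI2)
  fix p assume "p \<in> Kset \<alpha>"
  then obtain z where z: "norm z \<le> 1" and zp: "p = (exp z, exp (complex_of_real \<alpha> * z))"
    unfolding Kset_def by auto
  have "Re z \<le> 1" using z complex_Re_le_cmod[of z] by linarith
  then have n1: "norm (exp z) \<le> exp 1" by simp
  have "Re (complex_of_real \<alpha> * z) \<le> \<bar>\<alpha>\<bar> * norm z"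
    using complex_Re_le_cmod[of "complex_of_real \<alpha> * z"] by (simp add: norm_mult)
  also have "\<dots> \<le> \<bar>\<alpha>\<bar>" using z by (simp add: mult_left_le)
  finally have n2: "norm (exp (complex_of_real \<alpha> * z)) \<le> exp \<bar>\<alpha>\<bar>" by simp
  show "norm (evalP n c (fst p) (snd p))
          \<le> (\<Sum>k\<in>{(i,j). i + j \<le> n}. norm (c (fst k) (snd k)) * exp 1 ^ fst k * exp \<bar>\<alpha>\<bar> ^ snd k)"
    using evalP_norm_bound[OF n1 n2, of n c] zp by simp
qed

lemma supK_ge: "p \<in> Kset \<alpha> \<Longrightarrow> norm (evalP n c (fst p) (snd p)) \<le> supK \<alpha> n c"
  unfolding supK_def by (rule cSUP_upper[OF _ bdd_above_K])

lemma supK_nonneg: "0 \<le> supK \<alpha> n c"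
  using supK_ge[OF Kset_mem[of 0 \<alpha>], of n c] by (rule order_trans[OF norm_ge_zero]) simp

text \<open>Step (1): for irrational alpha the sup over the bidisk is controlled by the sup
  over K (restricted to the real segment [0,1]), via the coefficients.\<close>
lemma supBidisk_le_supK:
  assumes "\<alpha> \<notin> \<rat>"
  shows "\<exists>C\<ge>0. \<forall>c. supBidisk n c \<le> C * supK \<alpha> n c"
proof -
  let ?I = "{(i,j). i + j \<le> n}"
  have "\<forall>k\<in>?I. \<exists>C\<ge>0. \<forall>(c::nat\<times>nat \<Rightarrow> complex) B.
          (\<forall>t\<in>{0..1}. norm (\<Sum>j\<in>?I. c j * exp (complex_of_real (freq \<alpha> j * t))) \<le> B)
            \<longrightarrow> norm (c k) \<le> C * B"
    using exp_sum_coeff_bound[OF finite_monomials inj_on_subset[OF inj_freq[OF assms] subset_UNIV]] by blast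
  then obtain Cf where "\<forall>k\<in>?I. Cf k \<ge> 0 \<and> (\<forall>(c::nat\<times>nat \<Rightarrow> complex) B.
          (\<forall>t\<in>{0..1}. norm (\<Sum>j\<in>?I. c j * exp (complex_of_real (freq \<alpha> j * t))) \<le> B)
            \<longrightarrow> norm (c k) \<le> Cf k * B)"
    by (rule bchoice[THEN exE])
  then have Cf0: "\<And>k. k \<in> ?I \<Longrightarrow> Cf k \<ge> 0"
    and Cf: "\<And>k c B. k \<in> ?I \<Longrightarrow>
          (\<forall>t\<in>{0..1}. norm (\<Sum>j\<in>?I. c j * exp (complex_of_real (freq \<alpha> j * t))) \<le> B)
            \<Longrightarrow> norm (c k) \<le> Cf k * B"
    by blast+
  have "supBidisk n c \<le> (\<Sum>k\<in>?I. Cf k) * supK \<alpha> n c" for c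
  proof -
    have onK: "\<forall>t\<in>{0..1}. norm (\<Sum>j\<in>?I. c (fst j) (snd j) * exp (complex_of_real (freq \<alpha> j * t)))
                 \<le> supK \<alpha> n c"
    proof
      fix t :: real assume "t \<in> {0..1}"
      then have "norm (complex_of_real t) \<le> 1" by auto
      from supK_ge[OF Kset_mem[OF this], of n c]
      show "norm (\<Sum>j\<in>?I. c (fst j) (snd j) * exp (complex_of_real (freq \<alpha> j * t))) \<le> supK \<alpha> n c"
        by (simp add: evalP_on_K)
    qed
    have "supBidisk n c \<le> (\<Sum>k\<in>?I. norm (c (fst k) (snd k)))" by (rule supBidisk_le_coeffs)
    also have "\<dots> \<le> (\<Sum>k\<in>?I. Cf k * supK \<alpha> n c)"
      by (rule sum_mono) (use Cf[OF _ onK] in auto)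
    also have "\<dots> = (\<Sum>k\<in>?I. Cf k) * supK \<alpha> n c" by (simp add: sum_distrib_right)
    finally show ?thesis .
  qed
  moreover have "(\<Sum>k\<in>?I. Cf k) \<ge> 0" using Cf0 by (intro sum_nonneg) auto
  ultimately show ?thesis by blast
qed

lemma E_set_bdd_above:
  assumes "\<alpha> \<notin> \<rat>"
  shows "bdd_above {supBidisk n c |c. supK \<alpha> n c \<le> 1}"
proof -
  obtain C where C0: "C \<ge> 0" and C: "\<And>c. supBidisk n c \<le> C * supK \<alpha> n c"
    using supBidisk_le_supK[OF assms] by blast
  have "supBidisk n c \<le> C" if "supK \<alpha> n c \<le> 1" for c
    using C[of c] mult_left_mono[OF that C0] by simp
  then show ?thesis by (intro bdd_aboveI) auto
qed

lemma E_n_ge_ratio: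
  assumes irr: "\<alpha> \<notin> \<rat>" and S: "0 < supK \<alpha> n c" and p: "p \<in> bidisk"
  shows "norm (evalP n c (fst p) (snd p)) / supK \<alpha> n c \<le> E_n n \<alpha>"
proof -
  define S where "S = supK \<alpha> n c"
  define c' where "c' i j = c i j / complex_of_real S" for i j
  have ev: "evalP n c' z w = evalP n c z w / complex_of_real S" for z w
    unfolding c'_def by (rule evalP_divide)
  have "supK \<alpha> n c' \<le> 1"
    unfolding supK_def
  proof (rule cSUP_least)
    show "Kset \<alpha> \<noteq> {}" using Kset_mem[of 0 \<alpha>] by auto
    fix q assume "q \<in> Kset \<alpha>"
    then have "norm (evalP n c (fst q) (snd q)) \<le> S" unfolding S_def by (rule supK_ge)
    then show "norm (evalP n c' (fst q) (snd q)) \<le> 1"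
      using S by (simp add: ev norm_divide S_def)
  qed
  then have "supBidisk n c' \<le> E_n n \<alpha>"
    unfolding E_n_def by (intro cSup_upper E_set_bdd_above[OF irr]) auto
  moreover have "norm (evalP n c (fst p) (snd p)) / S = norm (evalP n c' (fst p) (snd p))"
    using S by (simp add: ev norm_divide S_def)
  moreover have "norm (evalP n c' (fst p) (snd p)) \<le> supBidisk n c'" by (rule supBidisk_ge[OF p])
  ultimately show ?thesis unfolding S_def by linarith
qed

lemma supK_pos:
  assumes irr: "\<alpha> \<notin> \<rat>" and c00: "c 0 0 \<noteq> 0"
  shows "0 < supK \<alpha> n c"
proof -
  obtain C where C: "supBidisk n c \<le> C * supK \<alpha> n c"
    using supBidisk_le_supK[OF irr] by blast
  have "0 < norm (c 0 0)" using c00 by simp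
  also have "norm (c 0 0) \<le> supBidisk n c"
    using supBidisk_ge[OF bidisk_zero, of n c] by (simp add: evalP_00)
  finally have "supK \<alpha> n c \<noteq> 0" using C by auto
  then show ?thesis using supK_nonneg[of \<alpha> n c] by simp
qed

section \<open>Divided-difference exponential sums\<close>

text \<open>The m-th Taylor coefficient (times m!) of the divided-difference exponential sum
  sum_k exp(Lambda_k z) / prod_(l /= k) (Lambda_k - Lambda_l): the divided difference
  of x^m at the nodes Lambda_k, k in T.\<close>
definition divdiff_pow :: "('a \<Rightarrow> real) \<Rightarrow> 'a set \<Rightarrow> nat \<Rightarrow> real" where
  "divdiff_pow \<Lambda> T m = (\<Sum>k\<in>T. \<Lambda> k ^ m / (\<Prod>l\<in>T-{k}. (\<Lambda> k - \<Lambda> l)))"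

lemma divdiff_pow_insert:
  assumes fin: "finite T" and a: "a \<notin> T" and inj: "inj_on \<Lambda> (insert a T)"
  shows "divdiff_pow \<Lambda> (insert a T) (Suc m) = \<Lambda> a * divdiff_pow \<Lambda> (insert a T) m + divdiff_pow \<Lambda> T m"
proof -
  have "divdiff_pow \<Lambda> (insert a T) (Suc m) - \<Lambda> a * divdiff_pow \<Lambda> (insert a T) m
      = (\<Sum>k\<in>insert a T. \<Lambda> k ^ m * (\<Lambda> k - \<Lambda> a) / (\<Prod>l\<in>insert a T-{k}. (\<Lambda> k - \<Lambda> l)))"
    unfolding divdiff_pow_def sum_distrib_left sum_subtractf[symmetric]
    by (rule sum.cong) (simp_all add: right_diff_distrib diff_divide_distrib mult.commute)
  also have "\<dots> = (\<Sum>k\<in>T. \<Lambda> k ^ m * (\<Lambda> k - \<Lambda> a) / (\<Prod>l\<in>insert a T-{k}. (\<Lambda> k - \<Lambda> l)))"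
    using fin a by simp
  also have "\<dots> = (\<Sum>k\<in>T. \<Lambda> k ^ m / (\<Prod>l\<in>T-{k}. (\<Lambda> k - \<Lambda> l)))"
  proof (rule sum.cong[OF refl])
    fix k assume k: "k \<in> T"
    have ka: "k \<noteq> a" using k a by auto
    have ne: "\<Lambda> k - \<Lambda> a \<noteq> 0" using inj k ka by (auto simp: inj_on_def)
    have "insert a T - {k} = insert a (T - {k})" using ka by auto
    then have "(\<Prod>l\<in>insert a T-{k}. (\<Lambda> k - \<Lambda> l)) = (\<Lambda> k - \<Lambda> a) * (\<Prod>l\<in>T-{k}. (\<Lambda> k - \<Lambda> l))"
      using fin a by simp
    then show "\<Lambda> k ^ m * (\<Lambda> k - \<Lambda> a) / (\<Prod>l\<in>insert a T-{k}. (\<Lambda> k - \<Lambda> l))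
               = \<Lambda> k ^ m / (\<Prod>l\<in>T-{k}. (\<Lambda> k - \<Lambda> l))"
      using ne by simp
  qed
  finally show ?thesis unfolding divdiff_pow_def by simp
qed

lemma divdiff_pow_0:
  assumes "finite T" "inj_on \<Lambda> T"
  shows "divdiff_pow \<Lambda> T 0 = (if card T = 1 then 1 else 0)"
  using assms
proof (induction "card T" arbitrary: T rule: less_induct)
  case less
  show ?case
  proof (cases "card T \<le> 1")
    case True
    then consider "T = {}" | a where "T = {a}" using less.prems(1)
      by (cases "card T") (auto simp: card_1_singleton_iff)
    then show ?thesis by cases (auto simp: divdiff_pow_def)
  next
    case False
    then have "card T = Suc (Suc (card T - 2))" by arith
    then obtain a b S where T: "T = insert a (insert b S)" and ab: "a \<noteq> b" "a \<notin> S" "b \<notin> S"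
      unfolding card_Suc_eq by auto
    have finS: "finite S" using less.prems(1) T by simp
    have injT: "inj_on \<Lambda> (insert a (insert b S))" using less.prems(2) T by simp
    have cT: "card T = Suc (Suc (card S))" using T finS ab by simp
    have IH: "divdiff_pow \<Lambda> (insert x S) 0 = (if card (insert x S) = 1 then 1 else 0)"
      if "x \<in> {a, b}" for x
      by (rule less.hyps) (use that cT finS ab injT in \<open>auto intro: inj_on_subset\<close>)
    have "divdiff_pow \<Lambda> T (Suc 0) = \<Lambda> a * divdiff_pow \<Lambda> T 0 + divdiff_pow \<Lambda> (insert b S) 0"
      unfolding T using divdiff_pow_insert[of "insert b S" a \<Lambda> 0] finS ab injT by simp
    moreover have "divdiff_pow \<Lambda> T (Suc 0) = \<Lambda> b * divdiff_pow \<Lambda> T 0 + divdiff_pow \<Lambda> (insert a S) 0"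
      unfolding T using divdiff_pow_insert[of "insert a S" b \<Lambda> 0] finS ab injT
      by (simp add: insert_commute)
    moreover have "card (insert b S) = card (insert a S)" using finS ab by simp
    ultimately have "(\<Lambda> a - \<Lambda> b) * divdiff_pow \<Lambda> T 0 = 0" using IH by (auto simp: algebra_simps)
    moreover have "\<Lambda> a \<noteq> \<Lambda> b" using injT ab by (auto simp: inj_on_def)
    ultimately show ?thesis using cT by simp
  qed
qed

lemma choose_power_step:
  fixes N :: real
  shows "N * real (m choose Suc s) * N ^ (m - Suc s) + real (m choose s) * N ^ (m - s)
       = real (Suc m choose Suc s) * N ^ (Suc m - Suc s)"
proof (cases "m \<ge> Suc s")
  case True
  then have "N * N ^ (m - Suc s) = N ^ (m - s)"
    by (metis Suc_diff_Suc Suc_le_lessD power_Suc)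
  then show ?thesis by (simp add: algebra_simps)
next
  case False
  then show ?thesis by simp
qed

text \<open>For nodes in [0,N] the divided differences of x^m are nonnegative and bounded by
  those of the extremal configuration where all s+1 nodes equal N.\<close>
lemma divdiff_pow_bound:
  assumes "finite T" "T \<noteq> {}" "inj_on \<Lambda> T" "\<forall>k\<in>T. 0 \<le> \<Lambda> k \<and> \<Lambda> k \<le> N"
  shows "0 \<le> divdiff_pow \<Lambda> T m \<and>
         divdiff_pow \<Lambda> T m \<le> real (m choose (card T - 1)) * N ^ (m - (card T - 1))"
  using assms
proof (induction m arbitrary: T)
  case 0
  have N0: "0 \<le> N" using "0.prems"(2,4) by fastforce
  show ?case using divdiff_pow_0[OF "0.prems"(1,3)] N0 by auto
next
  case (Suc m)
  obtain a where aT: "a \<in> T" using Suc.prems(2) by blast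
  define S where "S = T - {a}"
  have T: "T = insert a S" and aS: "a \<notin> S" and finS: "finite S"
    using aT Suc.prems(1) unfolding S_def by auto
  have a0: "0 \<le> \<Lambda> a" "\<Lambda> a \<le> N" using Suc.prems(4) aT by fastforce+
  show ?case
  proof (cases "S = {}")
    case True
    then have "T = {a}" using T by simp
    moreover have "\<Lambda> a ^ Suc m \<le> N ^ Suc m" using a0 by (intro power_mono) auto
    ultimately show ?thesis using a0 by (simp add: divdiff_pow_def)
  next
    case False
    then obtain s where s: "card S = Suc s" using finS by (cases "card S") auto
    have cT: "card T - 1 = Suc s" using T aS finS s by simp
    have IT: "0 \<le> divdiff_pow \<Lambda> T m \<and> divdiff_pow \<Lambda> T m \<le> real (m choose Suc s) * N ^ (m - Suc s)"
      using Suc.IH[OF Suc.prems] unfolding cT .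
    have IS: "0 \<le> divdiff_pow \<Lambda> S m \<and> divdiff_pow \<Lambda> S m \<le> real (m choose s) * N ^ (m - s)"
      using Suc.IH[of S] finS False Suc.prems(3,4) s T by (auto intro: inj_on_subset)
    have rec: "divdiff_pow \<Lambda> T (Suc m) = \<Lambda> a * divdiff_pow \<Lambda> T m + divdiff_pow \<Lambda> S m"
      using divdiff_pow_insert[OF finS aS, of \<Lambda> m] Suc.prems(3) T by simp
    have "\<Lambda> a * divdiff_pow \<Lambda> T m \<le> N * (real (m choose Suc s) * N ^ (m - Suc s))"
      using IT a0 by (intro mult_mono) auto
    then have "divdiff_pow \<Lambda> T (Suc m) \<le> real (Suc m choose Suc s) * N ^ (Suc m - Suc s)"
      using rec IS choose_power_step[of N m s] by (simp add: mult.assoc)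
    moreover have "0 \<le> divdiff_pow \<Lambda> T (Suc m)" using rec IT IS a0 by simp
    ultimately show ?thesis using cT by simp
  qed
qed

lemma divdiff_exp_sum_sums:
  fixes \<Lambda> :: "'a \<Rightarrow> real" and z :: complex
  assumes fin: "finite T"
  shows "(\<lambda>m. complex_of_real (divdiff_pow \<Lambda> T m) * z ^ m / fact m) sums
           (\<Sum>k\<in>T. complex_of_real (1 / (\<Prod>l\<in>T-{k}. (\<Lambda> k - \<Lambda> l))) * exp (complex_of_real (\<Lambda> k) * z))"
proof -
  have "(\<lambda>m. \<Sum>k\<in>T. complex_of_real (1 / (\<Prod>l\<in>T-{k}. (\<Lambda> k - \<Lambda> l))) * ((complex_of_real (\<Lambda> k) * z) ^ m /\<^sub>R fact m))
        sums (\<Sum>k\<in>T. complex_of_real (1 / (\<Prod>l\<in>T-{k}. (\<Lambda> k - \<Lambda> l))) * exp (complex_of_real (\<Lambda> k) * z))"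
    by (intro sums_sum sums_mult exp_converges)
  moreover have "(\<Sum>k\<in>T. complex_of_real (1 / (\<Prod>l\<in>T-{k}. (\<Lambda> k - \<Lambda> l))) * ((complex_of_real (\<Lambda> k) * z) ^ m /\<^sub>R fact m))
      = complex_of_real (divdiff_pow \<Lambda> T m) * z ^ m / fact m" for m
    unfolding divdiff_pow_def of_real_sum sum_distrib_right sum_divide_distrib
    by (rule sum.cong) (auto simp: scaleR_conv_of_real power_mult_distrib field_simps)
  ultimately show ?thesis by simp
qed

text \<open>The majorant series: the Taylor series of x^s exp(N x) / s! at x = 1.\<close>
lemma choose_power_sums:
  fixes N :: real
  shows "(\<lambda>m. real (m choose s) * N ^ (m - s) / fact m) sums (exp N / fact s)"
proof -
  have "(\<lambda>i. N ^ i / fact i / fact s) sums (exp N / fact s)"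
    using exp_converges[of N] by (intro sums_divide) (simp add: divide_inverse mult.commute)
  moreover have "real ((i + s) choose s) * N ^ (i + s - s) / fact (i + s) = N ^ i / fact i / fact s" for i
  proof -
    have "fact s * fact i * ((i + s) choose s) = (fact (i + s) :: nat)"
      using binomial_fact_lemma[of s "i+s"] by simp
    then have "fact s * fact i * real ((i + s) choose s) = (fact (i + s) :: real)"
      by (metis of_nat_fact of_nat_mult)
    then show ?thesis by (simp add: field_simps)
  qed
  ultimately have "(\<lambda>i. real ((i + s) choose s) * N ^ (i + s - s) / fact (i + s)) sums (exp N / fact s)"
    by simp
  then show ?thesis by (subst sums_zero_iff_shift[symmetric, of s]) auto
qed

lemma divdiff_exp_sum_bound:
  fixes \<Lambda> :: "'a \<Rightarrow> real" and z :: complex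
  assumes fin: "finite T" "T \<noteq> {}" "inj_on \<Lambda> T" "\<forall>k\<in>T. 0 \<le> \<Lambda> k \<and> \<Lambda> k \<le> N" and z: "norm z \<le> 1"
  shows "norm (\<Sum>k\<in>T. complex_of_real (1 / (\<Prod>l\<in>T-{k}. (\<Lambda> k - \<Lambda> l))) * exp (complex_of_real (\<Lambda> k) * z))
          \<le> exp N / fact (card T - 1)"
proof -
  let ?s = "card T - 1"
  have "norm (suminf (\<lambda>m. complex_of_real (divdiff_pow \<Lambda> T m) * z ^ m / fact m))
      \<le> suminf (\<lambda>m. real (m choose ?s) * N ^ (m - ?s) / fact m)"
  proof (rule norm_suminf_le)
    fix m
    have b: "0 \<le> divdiff_pow \<Lambda> T m \<and> divdiff_pow \<Lambda> T m \<le> real (m choose ?s) * N ^ (m - ?s)"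
      by (rule divdiff_pow_bound[OF fin])
    have "norm (complex_of_real (divdiff_pow \<Lambda> T m) * z ^ m / fact m) = divdiff_pow \<Lambda> T m * norm z ^ m / fact m"
      using b by (simp add: norm_mult norm_divide norm_power)
    also have "\<dots> \<le> divdiff_pow \<Lambda> T m / fact m"
      using b z mult_left_le[OF power_le_one[of "norm z" m]] by (intro divide_right_mono) auto
    also have "\<dots> \<le> real (m choose ?s) * N ^ (m - ?s) / fact m"
      using b by (intro divide_right_mono) auto
    finally show "norm (complex_of_real (divdiff_pow \<Lambda> T m) * z ^ m / fact m)
                    \<le> real (m choose ?s) * N ^ (m - ?s) / fact m" .
  next
    show "summable (\<lambda>m. real (m choose ?s) * N ^ (m - ?s) / fact m)"
      using choose_power_sums by (rule sums_summable)
  qed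
  then show ?thesis
    using sums_unique[OF divdiff_exp_sum_sums[OF fin(1), of \<Lambda> z]] sums_unique[OF choose_power_sums[of ?s N]]
    by simp
qed

lemma divdiff_weight_at_zero:
  fixes \<Lambda> :: "'a \<Rightarrow> real"
  assumes fin: "finite T" and k0: "k0 \<in> T" "\<Lambda> k0 = 0"
    and range: "\<forall>l\<in>T-{k0}. 0 < \<Lambda> l \<and> \<Lambda> l \<le> N"
  shows "1 / N ^ (card T - 1) \<le> \<bar>1 / (\<Prod>l\<in>T-{k0}. (\<Lambda> k0 - \<Lambda> l))\<bar>"
proof -
  have "\<bar>\<Prod>l\<in>T-{k0}. (\<Lambda> k0 - \<Lambda> l)\<bar> = (\<Prod>l\<in>T-{k0}. \<Lambda> l)"
    unfolding abs_prod
  proof (rule prod.cong[OF refl])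
    fix l assume "l \<in> T - {k0}"
    then have "0 < \<Lambda> l" using range by blast
    then show "\<bar>\<Lambda> k0 - \<Lambda> l\<bar> = \<Lambda> l" using k0(2) by simp
  qed
  moreover have "0 < (\<Prod>l\<in>T-{k0}. \<Lambda> l)" using range by (intro prod_pos) auto
  moreover have "(\<Prod>l\<in>T-{k0}. \<Lambda> l) \<le> (\<Prod>l\<in>T-{k0}. N)"
  proof (rule prod_mono)
    fix l assume "l \<in> T - {k0}"
    with range show "0 \<le> \<Lambda> l \<and> \<Lambda> l \<le> N" by (simp add: less_imp_le)
  qed
  moreover have "(\<Prod>l\<in>T-{k0}. N) = N ^ (card T - 1)"
    using fin k0 by (simp add: card_Diff_singleton)
  ultimately show ?thesis by (simp add: frac_le)
qed

section \<open>Lower bounds for E_n and e_n\<close>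

lemma freq_bounds:
  assumes "0 < \<alpha>" "\<alpha> < 1" "fst k + snd k \<le> n"
  shows "0 \<le> freq \<alpha> k \<and> freq \<alpha> k \<le> real n"
proof -
  have "\<alpha> * real (snd k) \<le> real (snd k)" using assms(1,2) by (simp add: mult_left_le_one_le)
  then show ?thesis using assms unfolding freq_def by auto
qed

lemma freq_pos:
  assumes "0 < \<alpha>" "k \<noteq> (0,0)"
  shows "0 < freq \<alpha> k"
proof -
  have "0 < fst k \<or> 0 < snd k" using assms(2) by (cases k) auto
  then show ?thesis using assms(1) unfolding freq_def by (auto intro: add_pos_nonneg add_nonneg_pos)
qed

definition divdiff_coeffs :: "real \<Rightarrow> (nat \<times> nat) set \<Rightarrow> nat \<Rightarrow> nat \<Rightarrow> complex" where
  "divdiff_coeffs \<alpha> T i j =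
     (if (i,j) \<in> T then complex_of_real (1 / (\<Prod>l\<in>T-{(i,j)}. (freq \<alpha> (i,j) - freq \<alpha> l))) else 0)"

text \<open>On K the test polynomial is the divided-difference exponential sum, so its sup is
  at most e^n / s!.\<close>
lemma supK_divdiff_coeffs:
  assumes irr: "\<alpha> \<notin> \<rat>" and a0: "0 < \<alpha>" and a1: "\<alpha> < 1"
    and TI: "T \<subseteq> {(i,j). i + j \<le> n}" and T0: "(0,0) \<in> T"
  shows "supK \<alpha> n (divdiff_coeffs \<alpha> T) \<le> exp (real n) / fact (card T - 1)"
  unfolding supK_def
proof (rule cSUP_least)
  show "Kset \<alpha> \<noteq> {}" using Kset_mem[of 0 \<alpha>] by auto
  let ?w = "\<lambda>k. complex_of_real (1 / (\<Prod>l\<in>T-{k}. (freq \<alpha> k - freq \<alpha> l)))"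
  have finT: "finite T" using finite_subset[OF TI finite_monomials] .
  have injT: "inj_on (freq \<alpha>) T" using inj_freq[OF irr] by (rule inj_on_subset) simp
  fix p assume "p \<in> Kset \<alpha>"
  then obtain z where z: "norm z \<le> 1" and p: "p = (exp z, exp (complex_of_real \<alpha> * z))"
    unfolding Kset_def by auto
  have "evalP n (divdiff_coeffs \<alpha> T) (fst p) (snd p)
      = (\<Sum>k\<in>T. divdiff_coeffs \<alpha> T (fst k) (snd k) * exp (complex_of_real (freq \<alpha> k) * z))"
    unfolding p fst_conv snd_conv evalP_on_K
    by (rule sum.mono_neutral_right[OF finite_monomials TI]) (auto simp: divdiff_coeffs_def)
  also have "\<dots> = (\<Sum>k\<in>T. ?w k * exp (complex_of_real (freq \<alpha> k) * z))"
    by (simp add: divdiff_coeffs_def)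
  finally have "norm (evalP n (divdiff_coeffs \<alpha> T) (fst p) (snd p))
      = norm (\<Sum>k\<in>T. ?w k * exp (complex_of_real (freq \<alpha> k) * z))" by simp
  also have "\<dots> \<le> exp (real n) / fact (card T - 1)"
    by (rule divdiff_exp_sum_bound[OF finT _ injT _ z]) (use T0 TI freq_bounds[OF a0 a1] in auto)
  finally show "norm (evalP n (divdiff_coeffs \<alpha> T) (fst p) (snd p)) \<le> exp (real n) / fact (card T - 1)" .
qed

lemma divdiff_coeffs_00:
  assumes a0: "0 < \<alpha>" and a1: "\<alpha> < 1"
    and TI: "T \<subseteq> {(i,j). i + j \<le> n}" and T0: "(0,0) \<in> T"
  shows "1 / real n ^ (card T - 1) \<le> norm (divdiff_coeffs \<alpha> T 0 0)"
proof -
  have finT: "finite T" using finite_subset[OF TI finite_monomials] .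
  have "1 / real n ^ (card T - 1) \<le> \<bar>1 / (\<Prod>l\<in>T-{(0,0)}. (freq \<alpha> (0,0) - freq \<alpha> l))\<bar>"
    by (rule divdiff_weight_at_zero[OF finT T0])
       (use TI freq_bounds[OF a0 a1] freq_pos[OF a0] in \<open>auto simp: freq_def\<close>)
  then show ?thesis unfolding divdiff_coeffs_def if_P[OF T0] norm_of_real .
qed

lemma E_n_lower_bound:
  assumes irr: "\<alpha> \<notin> \<rat>" and a0: "0 < \<alpha>" and a1: "\<alpha> < 1" and n1: "n \<ge> 1"
    and TI: "T \<subseteq> {(i,j). i + j \<le> n}" and T0: "(0,0) \<in> T"
  shows "fact (card T - 1) / (real n ^ (card T - 1) * exp (real n)) \<le> E_n n \<alpha>"
proof -
  let ?s = "card T - 1"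
  let ?c = "divdiff_coeffs \<alpha> T"
  have c00: "1 / real n ^ ?s \<le> norm (?c 0 0)" by (rule divdiff_coeffs_00[OF a0 a1 TI T0])
  moreover have "0 < 1 / real n ^ ?s" using n1 by simp
  ultimately have "0 < norm (?c 0 0)" by linarith
  then have "?c 0 0 \<noteq> 0" by auto
  then have S: "0 < supK \<alpha> n ?c" by (rule supK_pos[OF irr])
  have "fact ?s / (real n ^ ?s * exp (real n)) = (1 / real n ^ ?s) / (exp (real n) / fact ?s)"
    by simp
  also have "\<dots> \<le> norm (evalP n ?c 0 0) / supK \<alpha> n ?c"
    using c00 supK_divdiff_coeffs[OF irr a0 a1 TI T0] S by (intro frac_le) (auto simp: evalP_00)
  also have "\<dots> \<le> E_n n \<alpha>"
    using E_n_ge_ratio[OF irr S bidisk_zero] by simp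
  finally show ?thesis .
qed

text \<open>Stirling-type lower bound s! >= s^s / e^s, from the s-th term of the series of e^s.\<close>
lemma fact_lower: "real s ^ s / exp (real s) \<le> fact s"
proof -
  have exp_sums: "(\<lambda>i. real s ^ i / fact i) sums exp (real s)"
    using exp_converges[of "real s"] by (simp add: divide_inverse mult.commute)
  have "(\<Sum>i\<in>{s}. real s ^ i / fact i) \<le> (\<Sum>i. real s ^ i / fact i)"
    using exp_sums by (intro sum_le_suminf) (auto simp: sums_iff)
  then have "real s ^ s / fact s \<le> exp (real s)" using exp_sums by (simp add: sums_iff)
  then show ?thesis by (simp add: field_simps)
qed

text \<open>Taking T = {0..m} x {0..m} in degree n = 2m, so s = m^2 + 2m.\<close>
lemma e_n_lower_bound:
  assumes irr: "\<alpha> \<notin> \<rat>" and a0: "0 < \<alpha>" and a1: "\<alpha> < 1" and m6: "m \<ge> 6"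
  shows "real m ^ 2 * ln (real m / (2 * exp 1)) - 2 * real m \<le> e_n (2*m) \<alpha>"
proof -
  define n where "n = 2 * m"
  define s where "s = m^2 + 2*m"
  define q where "q = real m / (2 * exp 1)"
  have n1: "n \<ge> 1" unfolding n_def using m6 by simp
  have q1: "q \<ge> 1" unfolding q_def using m6 exp_le by (simp add: field_simps)
  have TI: "{..m} \<times> {..m} \<subseteq> {(i,j). i + j \<le> n}" unfolding n_def by auto
  have card: "card ({..m} \<times> {..m}) - 1 = s"
    unfolding s_def by (simp add: card_cartesian_product power2_eq_square)
  have E: "fact s / (real n ^ s * exp (real n)) \<le> E_n n \<alpha>"
    using E_n_lower_bound[OF irr a0 a1 n1 TI] unfolding card by simp
  have "q ^ (m^2) / exp (real n) \<le> q ^ s / exp (real n)"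
    using q1 by (intro divide_right_mono power_increasing) (auto simp: s_def)
  also have "q \<le> real s / (exp 1 * real n)"
  proof -
    have "real s / (exp 1 * real n) = (real m + 2) / (2 * exp 1)"
      using m6 unfolding s_def n_def by (simp add: field_simps power2_eq_square)
    then show ?thesis unfolding q_def by (simp add: divide_right_mono)
  qed
  then have "q ^ s / exp (real n) \<le> (real s / (exp 1 * real n)) ^ s / exp (real n)"
    using q1 by (intro divide_right_mono power_mono) auto
  also have "\<dots> = (real s ^ s / exp (real s)) / (real n ^ s * exp (real n))"
    by (simp add: power_divide power_mult_distrib exp_of_nat_mult[symmetric] field_simps)
  also have "\<dots> \<le> fact s / (real n ^ s * exp (real n))"
    using fact_lower[of s] n1 by (intro divide_right_mono) auto
  finally have "q ^ (m^2) / exp (real n) \<le> E_n n \<alpha>" using E by linarith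
  moreover have "0 < q ^ (m^2) / exp (real n)" using q1 by simp
  ultimately have "ln (q ^ (m^2) / exp (real n)) \<le> e_n n \<alpha>"
    unfolding e_n_def by simp
  moreover have "ln (q ^ (m^2) / exp (real n)) = real m ^ 2 * ln q - real n"
    using q1 by (simp add: ln_div ln_realpow)
  ultimately show ?thesis unfolding n_def q_def by simp
qed

section \<open>The weight eps\<close>

lemma summable_dyadic_reciprocals:
  "summable (\<lambda>n::nat. if \<exists>k. n = 2 ^ k then 1 / real n else 0)"
proof (rule summableI_nonneg_bounded)
  let ?g = "\<lambda>n::nat. if \<exists>k. n = 2 ^ k then 1 / real n else 0"
  show "0 \<le> ?g n" for n by simp
  fix N :: nat
  have "(\<Sum>i<N. ?g i) = (\<Sum>i\<in>(\<lambda>k::nat. (2::nat) ^ k) ` {k. 2 ^ k < N}. ?g i)"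
    by (rule sum.mono_neutral_right) auto
  also have "\<dots> = (\<Sum>k\<in>{k. 2 ^ k < N}. (1/2::real) ^ k)"
    by (subst sum.reindex) (auto simp: inj_on_def power_divide)
  also have "\<dots> \<le> (\<Sum>k. (1/2::real) ^ k)"
  proof (rule sum_le_suminf)
    show "summable (\<lambda>k. (1/2::real) ^ k)" by (rule summable_geometric) simp
    have "{k::nat. 2 ^ k < N} \<subseteq> {..<N}"
      by (auto intro: less_trans[OF less_exp])
    then show "finite {k::nat. 2 ^ k < N}" by (rule finite_subset) simp
  qed simp
  also have "\<dots> = 2" using geometric_sums[of "1/2::real"] by (simp add: sums_iff)
  finally show "(\<Sum>i<N. ?g i) \<le> 2" .
qed

text \<open>First claim: n eps(n) is at most 1/n^2, plus 1/n at powers of two.\<close>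
lemma summable_n_eps_ex: "summable (\<lambda>n. real n * eps_ex n)"
proof (rule summable_comparison_test')
  show "summable (\<lambda>n. inverse (real n ^ 2) + (if \<exists>k. n = 2 ^ k then 1 / real n else 0))"
    by (intro summable_add inverse_power_summable summable_dyadic_reciprocals) simp
  fix n :: nat
  show "norm (real n * eps_ex n) \<le> inverse (real n ^ 2) + (if \<exists>k. n = 2 ^ k then 1 / real n else 0)"
  proof (cases "n = 0")
    case True then show ?thesis by (simp add: eps_ex_def)
  next
    case False
    then have "real n \<ge> 1" by simp
    then show ?thesis unfolding eps_ex_def
      by (auto simp: power2_eq_square power3_eq_cube field_simps)
  qed
qed

lemma eps_ex_e_n_dyadic:
  assumes irr: "\<alpha> \<notin> \<rat>" and a0: "0 < \<alpha>" and a1: "\<alpha> < 1" and k3: "k \<ge> 3"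
  shows "(real k * ln 2 - ln 2 - 1) / 4 - 1 / (2 * 2 ^ k) \<le> eps_ex (2 ^ Suc k) * e_n (2 ^ Suc k) \<alpha>"
proof -
  define m where "m = (2::nat) ^ k"
  have m8: "m \<ge> 8" unfolding m_def using power_increasing[OF k3, of "2::nat"] by simp
  then have mpos: "real m > 0" by simp
  have "\<exists>j. (2::nat) ^ Suc k = 2 ^ j" by blast
  then have eps: "eps_ex (2 ^ Suc k) = 1 / (4 * real m ^ 2)"
    unfolding eps_ex_def m_def by (simp add: power2_eq_square)
  have lnq: "ln (real m / (2 * exp 1)) = real k * ln 2 - ln 2 - 1"
    unfolding m_def by (simp add: ln_div ln_mult ln_realpow)
  have "real m ^ 2 * ln (real m / (2 * exp 1)) - 2 * real m \<le> e_n (2 ^ Suc k) \<alpha>"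
    using e_n_lower_bound[OF irr a0 a1 order_trans[OF _ m8]] by (simp add: m_def)
  then have "(real m ^ 2 * ln (real m / (2 * exp 1)) - 2 * real m) / (4 * real m ^ 2)
          \<le> eps_ex (2 ^ Suc k) * e_n (2 ^ Suc k) \<alpha>"
    using mpos unfolding eps by (simp add: divide_right_mono)
  also have "(real m ^ 2 * ln (real m / (2 * exp 1)) - 2 * real m) / (4 * real m ^ 2)
      = ln (real m / (2 * exp 1)) / 4 - 1 / (2 * real m)"
    using mpos by (simp add: field_simps power2_eq_square)
  finally show ?thesis unfolding lnq by (simp add: m_def)
qed

lemma limsup_eps_ex_e_n:
  assumes irr: "\<alpha> \<notin> \<rat>" and a0: "0 < \<alpha>" and a1: "\<alpha> < 1"
  shows "limsup (\<lambda>n. ereal (eps_ex n * e_n n \<alpha>)) = \<infinity>"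
proof -
  define X where "X n = ereal (eps_ex n * e_n n \<alpha>)" for n
  define r :: "nat \<Rightarrow> nat" where "r k = 2 ^ Suc k" for k
  have lower_tendsto: "filterlim (\<lambda>k::nat. (real k * ln 2 - ln 2 - 1) / 4 - 1 / (2 * 2 ^ k)) at_top sequentially"
    by real_asymp
  have "((X \<circ> r) \<longlongrightarrow> \<infinity>) sequentially"
    unfolding tendsto_PInfty
  proof
    fix B :: real
    have "eventually (\<lambda>k. B < (real k * ln 2 - ln 2 - 1) / 4 - 1 / (2 * 2 ^ k)) sequentially"
      using lower_tendsto by (simp add: filterlim_at_top_dense)
    moreover have "eventually (\<lambda>k::nat. k \<ge> 3) sequentially" by (rule eventually_ge_at_top)
    ultimately show "eventually (\<lambda>k. ereal B < (X \<circ> r) k) sequentially"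
    proof eventually_elim
      case (elim k)
      then show ?case using eps_ex_e_n_dyadic[OF irr a0 a1, of k] by (simp add: X_def r_def)
    qed
  qed
  then have "limsup (X \<circ> r) = \<infinity>" by (intro lim_imp_Limsup) simp_all
  moreover have "strict_mono r" unfolding r_def by (rule strict_monoI) simp
  then have "limsup (X \<circ> r) \<le> limsup X" by (rule limsup_subseq_mono)
  ultimately show ?thesis unfolding X_def by simp
qed

theorem mainTheorem11:
  shows "summable (\<lambda>n. real n * eps_ex n) \<and> U_set eps_ex = {0<..<1} - \<rat>"
  using summable_n_eps_ex limsup_eps_ex_e_n unfolding U_set_def by auto

end
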